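(* Let $T$ be a tree, $c:V(T)\to\mathbb{R}_{>0}$, and let $T'$ be a subtree of $T$ (with costs given by the restriction of $c$). Then $k(T',c)\le k(T,c)$.
   Context: For a tree $T$ with costs $c:V(T)\to\mathbb{R}_{>0}$ and $t\ge 0$, a heavy module with respect to $t$ is a set $H\subseteq V(T)$ such that $T[H]$ is connected, $c(v)>t$ for all $v\in H$, and $H$ is maximal with these properties. $k(T,c,t)$ is the number of heavy modules with respect to $t$, and $k(T,c)=\max_{t\ge 0}k(T,c,t)$. *)

theory Defs
  imports Complex_Main
begin

definition simple_graph :: "'a set \<Rightarrow> ('a \<Rightarrow> 'a \<Rightarrow> bool) \<Rightarrow> bool" where
  "simple_graph V E \<longleftrightarrow> finite V \<and> (\<forall>x y. E x y \<longrightarrow> x \<in> V \<and> y \<in> V)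
     \<and> (\<forall>x y. E x y \<longrightarrow> E y x) \<and> (\<forall>x. \<not> E x x)"

definition connected_on :: "('a \<Rightarrow> 'a \<Rightarrow> bool) \<Rightarrow> 'a set \<Rightarrow> bool" where
  "connected_on E S \<longleftrightarrow> S \<noteq> {} \<and>
     (\<forall>x\<in>S. \<forall>y\<in>S. (\<lambda>a b. a \<in> S \<and> b \<in> S \<and> E a b)\<^sup>*\<^sup>* x y)"

definition is_cycle :: "('a \<Rightarrow> 'a \<Rightarrow> bool) \<Rightarrow> 'a list \<Rightarrow> bool" where
  "is_cycle E vs \<longleftrightarrow> length vs \<ge> 3 \<and> distinct vs
     \<and> (\<forall>i. Suc i < length vs \<longrightarrow> E (vs ! i) (vs ! Suc i))
     \<and> E (last vs) (hd vs)"

definition tree :: "'a set \<Rightarrow> ('a \<Rightarrow> 'a \<Rightarrow> bool) \<Rightarrow> bool" where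
  "tree V E \<longleftrightarrow> simple_graph V E \<and> connected_on E V \<and> (\<nexists>vs. is_cycle E vs)"

definition induced :: "'a set \<Rightarrow> ('a \<Rightarrow> 'a \<Rightarrow> bool) \<Rightarrow> 'a \<Rightarrow> 'a \<Rightarrow> bool" where
  "induced V' E = (\<lambda>x y. x \<in> V' \<and> y \<in> V' \<and> E x y)"

definition heavy_module ::
  "'a set \<Rightarrow> ('a \<Rightarrow> 'a \<Rightarrow> bool) \<Rightarrow> ('a \<Rightarrow> real) \<Rightarrow> real \<Rightarrow> 'a set \<Rightarrow> bool" where
  "heavy_module V E c t H \<longleftrightarrow>
     (H \<subseteq> V \<and> connected_on E H \<and> (\<forall>v\<in>H. c v > t)) \<and>
     (\<forall>H'. H \<subseteq> H' \<and> H' \<subseteq> V \<and> connected_on E H' \<and> (\<forall>v\<in>H'. c v > t) \<longrightarrow> H' = H)"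

definition k_t :: "'a set \<Rightarrow> ('a \<Rightarrow> 'a \<Rightarrow> bool) \<Rightarrow> ('a \<Rightarrow> real) \<Rightarrow> real \<Rightarrow> nat" where
  "k_t V E c t = card {H. heavy_module V E c t H}"

definition k_max :: "'a set \<Rightarrow> ('a \<Rightarrow> 'a \<Rightarrow> bool) \<Rightarrow> ('a \<Rightarrow> real) \<Rightarrow> nat" where
  "k_max V E c = Max (k_t V E c ` {t. t \<ge> 0})"

end

theory Submission
  imports Defs
begin

text \<open>In a forest simple paths are unique, so the intersection of two connected vertex
sets is again connected. Fix a threshold t and a heavy module H of the subtree T'. It lies in
some heavy module K of T, and K \<inter> V(T') is a connected set of heavy vertices of T' containing H;
by maximality of H it equals H. Hence every heavy module of T' is the trace on V(T') of a heavy
module of T, so k(T',c,t) \<le> k(T,c,t) for every t, and the inequality passes to the maximum.\<close>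

lemma rtranclp_restrict_if_successively:
  assumes "successively E xs" "xs \<noteq> []" "set xs \<subseteq> S"
  shows "(\<lambda>a b. a \<in> S \<and> b \<in> S \<and> E a b)\<^sup>*\<^sup>* (hd xs) (last xs)"
  using assms
proof (induction xs)
  case (Cons x xs)
  show ?case
  proof (cases "xs = []")
    case False
    with Cons have "hd xs \<in> S" "E x (hd xs)" "x \<in> S"
      by (auto simp: successively_Cons)
    with Cons False show ?thesis
      by (auto simp: successively_Cons intro: converse_rtranclp_into_rtranclp)
  qed simp
qed simp

lemma simple_path_if_rtranclp_restrict:
  assumes "(\<lambda>a b. a \<in> S \<and> b \<in> S \<and> E a b)\<^sup>*\<^sup>* x y" "x \<in> S"
  shows "\<exists>xs. xs \<noteq> [] \<and> distinct xs \<and> successively E xs \<and> set xs \<subseteq> S \<and> hd xs = x \<and> last xs = y"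
  using assms
proof (induction rule: rtranclp_induct)
  case base
  then show ?case by (intro exI[of _ "[x]"]) simp
next
  case (step y z)
  then obtain xs where xs: "xs \<noteq> []" "distinct xs" "successively E xs" "set xs \<subseteq> S"
    "hd xs = x" "last xs = y"
    by blast
  show ?case
  proof (cases "z \<in> set xs")
    case True
    then obtain as bs where "xs = as @ z # bs" by (meson split_list)
    with xs show ?thesis
      by (intro exI[of _ "as @ [z]"]) (auto simp: successively_append_iff hd_append)
  next
    case False
    with xs step show ?thesis
      by (intro exI[of _ "xs @ [z]"]) (auto simp: successively_append_iff)
  qed
qed

lemma is_cycle_of_two_paths:
  assumes "symp E"
    and "successively E (x # as @ [z])" "successively E (x # cs @ [z])"
    and "distinct (x # as @ z # cs)" "as \<noteq> [] \<or> cs \<noteq> []"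
  shows "is_cycle E (x # as @ z # rev cs)"
proof -
  have "successively E (x # as)" "E (last (x # as)) z"
    using assms(2) successively_append_iff[of E "x # as" "[z]"] by auto
  moreover have "successively E (z # rev cs @ [x])"
  proof -
    have "successively E (rev (x # cs @ [z]))"
      unfolding successively_rev using assms(1,3) by (auto elim: successively_mono dest: sympD)
    then show ?thesis by simp
  qed
  ultimately have "successively E ((x # as) @ z # rev cs @ [x])"
    by (simp only: successively_append_iff) simp
  then have "successively E ((x # as @ z # rev cs) @ [x])"
    by simp
  then show ?thesis
    unfolding is_cycle_def successively_conv_nth[symmetric] successively_append_iff
    using assms(4,5) by (auto simp: Suc_le_eq)
qed

lemma simple_path_unique:
  assumes "symp E" and acyclic: "\<nexists>vs. is_cycle E vs"
    and "successively E xs" "successively E ys" "distinct xs" "distinct ys"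
    and "xs \<noteq> []" "ys \<noteq> []" "hd xs = hd ys" "last xs = last ys"
  shows "xs = ys"
  using assms(3-)
proof (induction xs arbitrary: ys)
  case (Cons x xs')
  obtain ys' where ys: "ys = x # ys'"
    using Cons.prems by (cases ys) auto
  consider "xs' = [] \<or> ys' = []" | "xs' \<noteq> []" "ys' \<noteq> []" "hd xs' = hd ys'"
    | "xs' \<noteq> []" "ys' \<noteq> []" "hd xs' \<noteq> hd ys'"
    by blast
  then show ?case
  proof cases
    case 1
    have "x \<notin> set xs'" "x \<notin> set ys'"
      using Cons.prems(3,4) unfolding ys by simp_all
    with 1 Cons.prems(8) show ?thesis
      unfolding ys by (metis last_ConsL last_ConsR last_in_set)
  next
    case 2
    then show ?thesis
      using Cons.IH[of ys'] Cons.prems unfolding ys by (simp add: successively_Cons)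
  next
    case 3
    then have "last xs' \<in> set ys'"
      using Cons.prems unfolding ys by simp
    then obtain as z bs where xs': "xs' = as @ z # bs" and "z \<in> set ys'"
      and as_off_ys': "\<forall>w\<in>set as. w \<notin> set ys'"
      using split_list_first_prop[of xs' "\<lambda>w. w \<in> set ys'"] \<open>xs' \<noteq> []\<close> by fastforce
    then obtain cs ds where ys': "ys' = cs @ z # ds"
      by (meson split_list)
    have "successively E ((x # as @ [z]) @ bs)" "successively E ((x # cs @ [z]) @ ds)"
      using Cons.prems(1,2) unfolding xs' ys ys' by simp_all
    then have "successively E (x # as @ [z])" "successively E (x # cs @ [z])"
      unfolding successively_append_iff by blast+
    moreover have "distinct (x # as @ z # cs)"
      using Cons.prems(3,4) as_off_ys' unfolding xs' ys ys' by auto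
    moreover have "as \<noteq> [] \<or> cs \<noteq> []"
      using 3 unfolding xs' ys' by auto
    ultimately have "is_cycle E (x # as @ z # rev cs)"
      using is_cycle_of_two_paths[OF \<open>symp E\<close>] by blast
    with acyclic show ?thesis by blast
  qed
qed simp

lemma connected_on_Int:
  assumes "symp E" "\<nexists>vs. is_cycle E vs"
    and A: "connected_on E A" and B: "connected_on E B" and "A \<inter> B \<noteq> {}"
  shows "connected_on E (A \<inter> B)"
  unfolding connected_on_def
proof (intro conjI ballI)
  fix x y
  assume x: "x \<in> A \<inter> B" and y: "y \<in> A \<inter> B"
  have "(\<lambda>a b. a \<in> A \<and> b \<in> A \<and> E a b)\<^sup>*\<^sup>* x y"
    using A x y unfolding connected_on_def by simp
  then obtain p where p: "p \<noteq> []" "distinct p" "successively E p" "set p \<subseteq> A" "hd p = x" "last p = y"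
    using simple_path_if_rtranclp_restrict[of _ E x y] x by blast
  have "(\<lambda>a b. a \<in> B \<and> b \<in> B \<and> E a b)\<^sup>*\<^sup>* x y"
    using B x y unfolding connected_on_def by simp
  then obtain q where q: "q \<noteq> []" "distinct q" "successively E q" "set q \<subseteq> B" "hd q = x" "last q = y"
    using simple_path_if_rtranclp_restrict[of _ E x y] x by blast
  have "p = q"
    using simple_path_unique[OF assms(1,2) p(3) q(3) p(2) q(2) p(1) q(1)] p(5,6) q(5,6)
    by simp
  with p(4) q(4) have "set p \<subseteq> A \<inter> B"
    by blast
  with p(1,3,5,6) show "(\<lambda>a b. a \<in> A \<inter> B \<and> b \<in> A \<inter> B \<and> E a b)\<^sup>*\<^sup>* x y"
    using rtranclp_restrict_if_successively[of E p "A \<inter> B"] by simp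
qed fact

lemma connected_on_induced:
  assumes "H \<subseteq> V'"
  shows "connected_on (induced V' E) H \<longleftrightarrow> connected_on E H"
proof -
  have "(\<lambda>a b. a \<in> H \<and> b \<in> H \<and> induced V' E a b) = (\<lambda>a b. a \<in> H \<and> b \<in> H \<and> E a b)"
    using assms unfolding induced_def by auto
  then show ?thesis
    unfolding connected_on_def by simp
qed

lemma heavy_moduleD:
  assumes "heavy_module V E c t H"
  shows "H \<subseteq> V" "connected_on E H" "\<And>v. v \<in> H \<Longrightarrow> t < c v"
  using assms unfolding heavy_module_def by blast+

lemma heavy_module_maximal:
  assumes "heavy_module V E c t H"
    and "H \<subseteq> H'" "H' \<subseteq> V" "connected_on E H'" "\<forall>v\<in>H'. t < c v"
  shows "H' = H"
  using assms unfolding heavy_module_def by blast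

lemma heavy_moduleI:
  assumes "H \<subseteq> V" "connected_on E H" "\<forall>v\<in>H. t < c v"
    and "\<And>H'. H \<subseteq> H' \<Longrightarrow> H' \<subseteq> V \<Longrightarrow> connected_on E H' \<Longrightarrow> \<forall>v\<in>H'. t < c v \<Longrightarrow> H' = H"
  shows "heavy_module V E c t H"
  using assms unfolding heavy_module_def by blast

lemma heavy_module_superset:
  assumes "finite V" "H \<subseteq> V" "connected_on E H" "\<forall>v\<in>H. t < c v"
  obtains K where "heavy_module V E c t K" "H \<subseteq> K"
proof -
  define candidates where
    "candidates = {K. K \<subseteq> V \<and> connected_on E K \<and> (\<forall>v\<in>K. t < c v)}"
  have finite: "finite candidates"
    by (rule finite_subset[of _ "Pow V"]) (use assms(1) in \<open>auto simp: candidates_def\<close>)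
  have H: "H \<in> candidates"
    using assms(2-4) by (simp add: candidates_def)
  obtain K where K: "K \<in> candidates" "H \<subseteq> K"
    and maximal: "\<forall>K'\<in>candidates. K \<subseteq> K' \<longrightarrow> K = K'"
    using finite_has_maximal2[OF finite H] by blast
  have "heavy_module V E c t K"
  proof (rule heavy_moduleI)
    show "K \<subseteq> V" "connected_on E K" "\<forall>v\<in>K. t < c v"
      using K(1) by (simp_all add: candidates_def)
  next
    fix K'
    assume "K \<subseteq> K'" "K' \<subseteq> V" "connected_on E K'" "\<forall>v\<in>K'. t < c v"
    then have "K' \<in> candidates" "K \<subseteq> K'"
      by (simp_all add: candidates_def)
    with maximal show "K' = K"
      by blast
  qed
  with K(2) show ?thesis
    using that by blast
qed

lemma heavy_module_Int_eq:
  assumes "symp E" "\<nexists>vs. is_cycle E vs" "connected_on E V'"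
    and H: "heavy_module V' (induced V' E) c t H"
    and K: "heavy_module V E c t K" "H \<subseteq> K"
  shows "K \<inter> V' = H"
proof (rule heavy_module_maximal[OF H])
  have "H \<subseteq> V'" "H \<noteq> {}"
    using heavy_moduleD(1,2)[OF H] unfolding connected_on_def by auto
  then show "H \<subseteq> K \<inter> V'"
    using K(2) by blast
  then have "K \<inter> V' \<noteq> {}"
    using \<open>H \<noteq> {}\<close> by blast
  then have "connected_on E (K \<inter> V')"
    using connected_on_Int[OF assms(1,2) heavy_moduleD(2)[OF K(1)] assms(3)] by blast
  then show "connected_on (induced V' E) (K \<inter> V')"
    using connected_on_induced[of "K \<inter> V'" V' E] by simp
  show "K \<inter> V' \<subseteq> V'" "\<forall>v\<in>K \<inter> V'. t < c v"
    using heavy_moduleD(3)[OF K(1)] by auto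
qed

lemma finite_heavy_modules:
  assumes "finite V"
  shows "finite {H. heavy_module V E c t H}"
  using assms heavy_moduleD(1) by (blast intro: finite_subset[of _ "Pow V"])

lemma k_t_induced_le:
  assumes "finite V" "symp E" "\<nexists>vs. is_cycle E vs" "V' \<subseteq> V" "connected_on E V'"
  shows "k_t V' (induced V' E) c t \<le> k_t V E c t"
proof -
  let ?M = "{K. heavy_module V E c t K}"
  have "{H. heavy_module V' (induced V' E) c t H} \<subseteq> (\<lambda>K. K \<inter> V') ` ?M"
  proof
    fix H
    assume "H \<in> {H. heavy_module V' (induced V' E) c t H}"
    then have H: "heavy_module V' (induced V' E) c t H"
      by simp
    then have "H \<subseteq> V" "connected_on E H" "\<forall>v\<in>H. t < c v"
      using heavy_moduleD[of V' "induced V' E" c t H] connected_on_induced[of H V' E] assms(4)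
      by auto
    then obtain K where K: "heavy_module V E c t K" "H \<subseteq> K"
      using heavy_module_superset[OF assms(1)] by metis
    then have "K \<inter> V' = H"
      using heavy_module_Int_eq[OF assms(2,3,5) H] by blast
    with K(1) show "H \<in> (\<lambda>K. K \<inter> V') ` ?M"
      by blast
  qed
  then have "k_t V' (induced V' E) c t \<le> card ((\<lambda>K. K \<inter> V') ` ?M)"
    unfolding k_t_def using assms(1) by (simp add: card_mono finite_heavy_modules)
  also have "\<dots> \<le> k_t V E c t"
    unfolding k_t_def using assms(1) by (simp add: card_image_le finite_heavy_modules)
  finally show ?thesis .
qed

lemma finite_image_k_t:
  assumes "finite V"
  shows "finite (k_t V E c ` T)"
proof (rule finite_subset)
  show "k_t V E c ` T \<subseteq> {..card (Pow V)}"
    unfolding k_t_def using assms by (auto intro!: card_mono dest: heavy_moduleD(1))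
qed simp

lemma Max_image_mono:
  assumes "finite (f ` S)" "finite (g ` S)" "S \<noteq> {}" "\<And>t. t \<in> S \<Longrightarrow> f t \<le> g t"
  shows "Max (f ` S) \<le> Max (g ` S)"
proof -
  have "f t \<le> Max (g ` S)" if "t \<in> S" for t
    using assms(2,4) that by (meson Max_ge image_eqI order_trans)
  with assms(1,3) show ?thesis
    by simp
qed

theorem mainTheorem2:
  fixes V V' :: "'a set" and E :: "'a \<Rightarrow> 'a \<Rightarrow> bool" and c :: "'a \<Rightarrow> real"
  assumes "tree V E"
    and "\<forall>v\<in>V. c v > 0"
    and "V' \<subseteq> V"
    and "tree V' (induced V' E)"
  shows "k_max V' (induced V' E) c \<le> k_max V E c"
proof -
  have "finite V" "symp E" "\<nexists>vs. is_cycle E vs"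
    using assms(1) unfolding tree_def simple_graph_def symp_def by blast+
  moreover have "connected_on E V'"
    using assms(4) connected_on_induced[of V' V' E] unfolding tree_def by simp
  ultimately have "k_t V' (induced V' E) c t \<le> k_t V E c t" for t
    using k_t_induced_le assms(3) by blast
  moreover have "finite V'"
    using \<open>finite V\<close> assms(3) by (rule finite_subset[rotated])
  ultimately show ?thesis
    unfolding k_max_def using \<open>finite V\<close>
    by (intro Max_image_mono finite_image_k_t) auto
qed

end
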